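(* Let $T$ be an $spo$-tableau and $x_1,x_2\in B_0$ with $x_1\le x_2$. Suppose that neither the insertion of $x_1$ into $T$ nor the insertion of $x_2$ into $U=T\leftarrow x_1$ causes a cancellation. Let $S_1$ be the new box of $U$ (not in the shape of $T$) and $S_2$ the new box of $U\leftarrow x_2$ (not in the shape of $U$). Then $S_2$ lies in a column strictly to the right of $S_1$ and in a row weakly above $S_1$.
   Context: Fix positive integers $m,n$. Let $B_0=\{1,\bar1,2,\bar2,\dots,m,\bar m\}$, $B_1=\{1^\circ,\dots,n^\circ\}$, $B=B_0\cup B_1$, totally ordered by $1<\bar1<2<\bar2<\cdots<m<\bar m<1^\circ<\cdots<n^\circ$. Rows are numbered from the top starting at 1, columns from the left. An $spo$-tableau of shape $\lambda$ is a filling of the Young diagram of $\lambda$ with entries of $B$ such that (i) the boxes containing entries of $B_0$ form a Young diagram $\sigma\subseteq\lambda$, and this part is weakly increasing along rows, strictly increasing down columns, and every entry in row $i$ is $\ge i$; (ii) the entries of $B_1$ (filling $\lambda/\sigma$) are strictly increasing along rows and weakly increasing down columns. $spo$-insertion: a forward jeu de taquin slide on an empty box with right neighbour $a$ and lower neighbour $b$ moves $a$ left into the empty box if $a<b$ or ($a=b\in B_1$), and moves $b$ up into the empty box if $b<a$ or ($a=b\in B_0$); if only one neighbour exists it moves in; slides are repeated until the empty box has no right or lower neighbour, and then that box is deleted. Inserting $z\in B_0$ into row $r$: if no entry of the row exceeds $z$, append $z$ in a new box at the end of the row; otherwise let $w$ be the least entry of the row with $w>z$; if $z=r$ (unbarred)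 and $w=\bar r$, delete $\bar r$ leaving an empty box (a cancellation); otherwise replace $w$ by $z$, displacing $w$. Inserting $z\in B_1$ into column $c$: if no entry of the column exceeds $z$, append $z$ in a new box at the bottom; otherwise replace the least entry $w>z$ of the column by $z$, displacing $w$. To insert $x\in B_0$ into $T$ (result $T\leftarrow x$) start by inserting $x$ into row 1; to insert $x\in B_1$ (result $x\rightarrow T$) start by inserting $x$ into column 1. Whenever an entry $w$ is displaced from a box in row $r$, column $c$: if $w\in B_0$ insert it into row $r+1$; if $w\in B_1$ insert it into column $c+1$. The process ends when an entry is placed in a new box, or when a cancellation occurs, in which case the empty box is moved to an outer corner by forward slides and deleted. If no cancellation occurs the result has exactly one new box. *)

theory Defs
  imports Main "HOL-Library.Product_Lexorder"
begin

text \<open>Alphabet B: Ub i is i, Br i is i-bar, Ci j is j-circle.\<close>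
datatype entry = Ub nat | Br nat | Ci nat

fun rank :: "entry \<Rightarrow> nat \<times> nat" where
  "rank (Ub i) = (0, 2 * i)"
| "rank (Br i) = (0, 2 * i + 1)"
| "rank (Ci j) = (1, j)"

lemma rank_inj: "rank a = rank b \<Longrightarrow> a = b"
  by (cases a; cases b; auto; presburger)

instantiation entry :: linorder
begin
definition less_eq_entry :: "entry \<Rightarrow> entry \<Rightarrow> bool" where
  "less_eq_entry a b \<longleftrightarrow> rank a \<le> rank b"
definition less_entry :: "entry \<Rightarrow> entry \<Rightarrow> bool" where
  "less_entry a b \<longleftrightarrow> rank a < rank b"
instance
  by standard (auto simp: less_eq_entry_def less_entry_def intro: rank_inj)
end

fun isB0 :: "entry \<Rightarrow> bool" where
  "isB0 (Ci _) = False"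
| "isB0 _ = True"

abbreviation isB1 :: "entry \<Rightarrow> bool" where "isB1 e \<equiv> \<not> isB0 e"

definition inB0 :: "nat \<Rightarrow> entry \<Rightarrow> bool" where
  "inB0 m e \<longleftrightarrow> (\<exists>i. 1 \<le> i \<and> i \<le> m \<and> (e = Ub i \<or> e = Br i))"

definition inB :: "nat \<Rightarrow> nat \<Rightarrow> entry \<Rightarrow> bool" where
  "inB m n e \<longleftrightarrow> inB0 m e \<or> (\<exists>j. 1 \<le> j \<and> j \<le> n \<and> e = Ci j)"

text \<open>A filling: partial map from positions (row, column), both 1-based, to entries.\<close>
type_synonym tab = "nat \<times> nat \<Rightarrow> entry option"

definition is_young :: "(nat \<times> nat) set \<Rightarrow> bool" where
  "is_young D \<longleftrightarrow> finite D \<and> (\<forall>(i,j)\<in>D. 1 \<le> i \<and> 1 \<le> j \<and>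
      (\<forall>i' j'. 1 \<le> i' \<and> i' \<le> i \<and> 1 \<le> j' \<and> j' \<le> j \<longrightarrow> (i',j') \<in> D))"

definition spo_tableau :: "nat \<Rightarrow> nat \<Rightarrow> tab \<Rightarrow> bool" where
  "spo_tableau m n T \<longleftrightarrow>
     is_young (dom T) \<and>
     (\<forall>p e. T p = Some e \<longrightarrow> inB m n e) \<and>
     is_young {p. \<exists>e. T p = Some e \<and> isB0 e} \<and>
     (\<forall>i j a b. T (i,j) = Some a \<longrightarrow> T (i,j+1) = Some b \<longrightarrow> isB0 a \<longrightarrow> isB0 b \<longrightarrow> a \<le> b) \<and>
     (\<forall>i j a b. T (i,j) = Some a \<longrightarrow> T (i+1,j) = Some b \<longrightarrow> isB0 a \<longrightarrow> isB0 b \<longrightarrow> a < b) \<and>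
     (\<forall>i j a. T (i,j) = Some a \<longrightarrow> isB0 a \<longrightarrow> Ub i \<le> a) \<and>
     (\<forall>i j a b. T (i,j) = Some a \<longrightarrow> T (i,j+1) = Some b \<longrightarrow> isB1 a \<longrightarrow> isB1 b \<longrightarrow> a < b) \<and>
     (\<forall>i j a b. T (i,j) = Some a \<longrightarrow> T (i+1,j) = Some b \<longrightarrow> isB1 a \<longrightarrow> isB1 b \<longrightarrow> a \<le> b)"

datatype istate =
    RowIns entry nat
  | ColIns entry nat
  | Hole "nat \<times> nat"           \<comment> \<open>empty box being slid outwards (after a cancellation)\<close>
  | NewBox "nat \<times> nat"
  | Cancelled

definition rowlen :: "tab \<Rightarrow> nat \<Rightarrow> nat" where
  "rowlen T r = card {c. T (r,c) \<noteq> None}"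

definition collen :: "tab \<Rightarrow> nat \<Rightarrow> nat" where
  "collen T c = card {r. T (r,c) \<noteq> None}"

definition displace :: "entry \<Rightarrow> nat \<times> nat \<Rightarrow> istate" where
  "displace w p = (if isB0 w then RowIns w (fst p + 1) else ColIns w (snd p + 1))"

definition move_into :: "tab \<Rightarrow> nat \<times> nat \<Rightarrow> nat \<times> nat \<Rightarrow> entry \<Rightarrow> tab \<times> istate" where
  "move_into T h q a = (T(h := Some a, q := None), Hole q)"

fun step :: "tab \<times> istate \<Rightarrow> tab \<times> istate" where
  "step (T, RowIns z r) =
     (if \<exists>c. \<exists>e. T (r,c) = Some e \<and> z < e then
        (let c = (LEAST c. \<exists>e. T (r,c) = Some e \<and> z < e); w = the (T (r,c)) in
         if z = Ub r \<and> w = Br r then (T((r,c) := None), Hole (r,c))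
         else (T((r,c) := Some z), displace w (r,c)))
      else (T((r, rowlen T r + 1) := Some z), NewBox (r, rowlen T r + 1)))"
| "step (T, ColIns z c) =
     (if \<exists>r. \<exists>e. T (r,c) = Some e \<and> z < e then
        (let r = (LEAST r. \<exists>e. T (r,c) = Some e \<and> z < e); w = the (T (r,c)) in
         (T((r,c) := Some z), displace w (r,c)))
      else (T((collen T c + 1, c) := Some z), NewBox (collen T c + 1, c)))"
| "step (T, Hole (i,j)) =
     (case (T (i,j+1), T (i+1,j)) of
        (Some a, Some b) \<Rightarrow>
           if a < b \<or> (a = b \<and> isB1 a) then move_into T (i,j) (i,j+1) a
           else move_into T (i,j) (i+1,j) b
      | (Some a, None) \<Rightarrow> move_into T (i,j) (i,j+1) a
      | (None, Some b) \<Rightarrow> move_into T (i,j) (i+1,j) b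
      | (None, None) \<Rightarrow> (T, Cancelled))"
| "step (T, NewBox p) = (T, NewBox p)"
| "step (T, Cancelled) = (T, Cancelled)"

definition ins_newbox :: "tab \<Rightarrow> entry \<Rightarrow> tab \<Rightarrow> nat \<times> nat \<Rightarrow> bool" where
  "ins_newbox T x U S \<longleftrightarrow> (\<exists>k. (step ^^ k) (T, RowIns x 1) = (U, NewBox S))"

end

(* Both insertions bump row by row. While both insert B0 entries into the same row r, the
   first inserts z and the second z' with z \<le> z'; since the first leaves z in row r of U,
   the second bumps strictly further right, and the bumped entries keep the same order. When
   the first path ends in a row, the second bumps or appends strictly to its right. When the
   second path turns into a column insertion at column c' + 1, the first path has ended left
   of c' or crosses column c' as a column insertion; from there on the second path always
   bumps, weakly higher, a smaller entry than the first, so it ends in a later column.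
   Being added successively to a Young diagram, the second new box strictly to the right of
   the first lies weakly above it. *)

theory Submission
  imports Defs
begin

lemma B0_less_B1: "isB0 a \<Longrightarrow> isB1 b \<Longrightarrow> a < b"
  by (cases a; cases b; simp add: less_entry_def)

lemma isB1_le: "a \<le> b \<Longrightarrow> isB1 a \<Longrightarrow> isB1 b"
  by (cases a; cases b; auto simp: less_eq_entry_def)

lemma isB0_le: "a \<le> b \<Longrightarrow> isB0 b \<Longrightarrow> isB0 a"
  using isB1_le by blast

subsection \<open>Terminating runs of the insertion process\<close>

text \<open>Big-step form of the iteration in ins_newbox, giving rule induction along the
  bumping path.\<close>
inductive runs_to :: "tab \<Rightarrow> istate \<Rightarrow> tab \<Rightarrow> nat \<times> nat \<Rightarrow> bool" where
  runs_to_NewBox: "runs_to T (NewBox p) T p"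
| runs_to_step: "step (T, s) = (T', s') \<Longrightarrow> \<forall>p. s \<noteq> NewBox p \<Longrightarrow> runs_to T' s' U S \<Longrightarrow> runs_to T s U S"

lemma step_Hole_cases:
  assumes "step (T, Hole q) = (T', s')"
  shows "(\<exists>q'. s' = Hole q') \<or> s' = Cancelled"
proof -
  obtain i j where "q = (i,j)" by fastforce
  with assms show ?thesis by (auto simp: move_into_def split: option.splits if_splits)
qed

lemma runs_to_not_Hole: "runs_to T s U S \<Longrightarrow> (\<forall>q. s \<noteq> Hole q) \<and> s \<noteq> Cancelled"
  by (induction rule: runs_to.induct) (use step_Hole_cases in fastforce)+

lemma funpow_step_NewBox: "(step ^^ k) (T, NewBox p) = (T, NewBox p)"
  by (induction k) auto

lemma funpow_step_runs_to: "(step ^^ k) (T, s) = (U, NewBox S) \<Longrightarrow> runs_to T s U S"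
proof (induction k arbitrary: T s)
  case 0
  then show ?case by (auto intro: runs_to_NewBox)
next
  case (Suc k)
  obtain T' s' where st: "step (T, s) = (T', s')" by fastforce
  show ?case
  proof (cases "\<exists>p. s = NewBox p")
    case True
    with Suc.prems show ?thesis by (auto simp: funpow_Suc_right funpow_step_NewBox runs_to_NewBox)
  next
    case False
    have "(step ^^ k) (T', s') = (U, NewBox S)"
      using Suc.prems st by (metis comp_apply funpow_Suc_right)
    with st False show ?thesis by (blast intro: runs_to_step Suc.IH)
  qed
qed

lemma ins_newbox_runs_to: "ins_newbox T x U S \<Longrightarrow> runs_to T (RowIns x 1) U S"
  unfolding ins_newbox_def using funpow_step_runs_to by blast

lemma runs_to_NewBoxD: "runs_to T (NewBox p) U S \<Longrightarrow> U = T \<and> S = p"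
  by (cases rule: runs_to.cases) blast+

lemma runs_to_stepD:
  "runs_to T s U S \<Longrightarrow> \<forall>p. s \<noteq> NewBox p \<Longrightarrow> step (T, s) = (T', s') \<Longrightarrow> runs_to T' s' U S"
  by (cases rule: runs_to.cases) auto

lemma displace_B0: "isB0 w \<Longrightarrow> displace w (i,j) = RowIns w (Suc i)"
  by (simp add: displace_def)

lemma displace_B1: "isB1 w \<Longrightarrow> displace w (i,j) = ColIns w (Suc j)"
  by (simp add: displace_def)

text \<open>A run that terminates never cancels, so every row step either appends or bumps.\<close>
lemma runs_to_RowIns_cases:
  assumes R: "runs_to W (RowIns z r) U S"
  obtains (new) "\<not> (\<exists>c e. W (r,c) = Some e \<and> z < e)"
      "U = W((r, rowlen W r + 1) := Some z)" "S = (r, rowlen W r + 1)"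
  | (bump) c w where "W (r,c) = Some w" "z < w" "\<forall>j<c. \<forall>e. W (r,j) = Some e \<longrightarrow> \<not> z < e"
      "runs_to (W((r,c) := Some z)) (displace w (r,c)) U S"
      "step (W, RowIns z r) = (W((r,c) := Some z), displace w (r,c))"
proof (cases "\<exists>c e. W (r,c) = Some e \<and> z < e")
  case False
  then have "step (W, RowIns z r) = (W((r, rowlen W r + 1) := Some z), NewBox (r, rowlen W r + 1))"
    by (simp only: step.simps if_not_P[OF False] if_False)
  from runs_to_stepD[OF R _ this] False show ?thesis
    using new runs_to_NewBoxD by blast
next
  case True
  define c where "c = (LEAST c. \<exists>e. W (r,c) = Some e \<and> z < e)"
  obtain w where w: "W (r,c) = Some w" "z < w"
    using LeastI_ex[OF True] unfolding c_def by blast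
  have min: "\<forall>j<c. \<forall>e. W (r,j) = Some e \<longrightarrow> \<not> z < e"
    unfolding c_def using not_less_Least by blast
  show ?thesis
  proof (cases "z = Ub r \<and> w = Br r")
    case True
    with \<open>\<exists>c e. _\<close> w have "step (W, RowIns z r) = (W((r,c) := None), Hole (r,c))"
      unfolding step.simps Let_def c_def[symmetric] by simp
    from runs_to_stepD[OF R _ this] show ?thesis using runs_to_not_Hole by blast
  next
    case False
    with \<open>\<exists>c e. _\<close> w have st: "step (W, RowIns z r) = (W((r,c) := Some z), displace w (r,c))"
      unfolding step.simps Let_def c_def[symmetric] by auto
    from runs_to_stepD[OF R _ st] show ?thesis using bump w min st by blast
  qed
qed

lemma runs_to_ColIns_cases:
  assumes R: "runs_to W (ColIns y d) U S"
  obtains (new) "\<not> (\<exists>i e. W (i,d) = Some e \<and> y < e)"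
      "U = W((collen W d + 1, d) := Some y)" "S = (collen W d + 1, d)"
  | (bump) i w where "W (i,d) = Some w" "y < w" "\<forall>k<i. \<forall>e. W (k,d) = Some e \<longrightarrow> \<not> y < e"
      "runs_to (W((i,d) := Some y)) (displace w (i,d)) U S"
      "step (W, ColIns y d) = (W((i,d) := Some y), displace w (i,d))"
proof (cases "\<exists>i e. W (i,d) = Some e \<and> y < e")
  case False
  then have "step (W, ColIns y d) = (W((collen W d + 1, d) := Some y), NewBox (collen W d + 1, d))"
    by (simp only: step.simps if_not_P[OF False] if_False)
  from runs_to_stepD[OF R _ this] False show ?thesis
    using new runs_to_NewBoxD by blast
next
  case True
  define i where "i = (LEAST i. \<exists>e. W (i,d) = Some e \<and> y < e)"
  obtain w where w: "W (i,d) = Some w" "y < w"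
    using LeastI_ex[OF True] unfolding i_def by blast
  have min: "\<forall>k<i. \<forall>e. W (k,d) = Some e \<longrightarrow> \<not> y < e"
    unfolding i_def using not_less_Least by blast
  from True w have st: "step (W, ColIns y d) = (W((i,d) := Some y), displace w (i,d))"
    by (simp add: Let_def i_def[symmetric])
  from runs_to_stepD[OF R _ st] show ?thesis using bump w min st by blast
qed

lemma runs_to_induct[consumes 2, case_names row_new row_bump col_new col_bump]:
  assumes "runs_to W s U S" "\<forall>p. s \<noteq> NewBox p"
    and row_new: "\<And>W z r. \<not> (\<exists>c e. W (r,c) = Some e \<and> z < e) \<Longrightarrow>
        P W (RowIns z r) (W((r, rowlen W r + 1) := Some z)) (r, rowlen W r + 1)"
    and row_bump: "\<And>W z r c w U S. W (r,c) = Some w \<Longrightarrow> z < w \<Longrightarrow>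
        \<forall>j<c. \<forall>e. W (r,j) = Some e \<longrightarrow> \<not> z < e \<Longrightarrow>
        runs_to (W((r,c) := Some z)) (displace w (r,c)) U S \<Longrightarrow>
        P (W((r,c) := Some z)) (displace w (r,c)) U S \<Longrightarrow> P W (RowIns z r) U S"
    and col_new: "\<And>W y d. \<not> (\<exists>i e. W (i,d) = Some e \<and> y < e) \<Longrightarrow>
        P W (ColIns y d) (W((collen W d + 1, d) := Some y)) (collen W d + 1, d)"
    and col_bump: "\<And>W y d i w U S. W (i,d) = Some w \<Longrightarrow> y < w \<Longrightarrow>
        \<forall>k<i. \<forall>e. W (k,d) = Some e \<longrightarrow> \<not> y < e \<Longrightarrow>
        runs_to (W((i,d) := Some y)) (displace w (i,d)) U S \<Longrightarrow>
        P (W((i,d) := Some y)) (displace w (i,d)) U S \<Longrightarrow> P W (ColIns y d) U S"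
  shows "P W s U S"
  using assms(1,2)
proof (induction rule: runs_to.induct)
  case (runs_to_NewBox T p)
  then show ?case by simp
next
  case (runs_to_step T s T' s' U S)
  have R: "runs_to T s U S" using runs_to.runs_to_step[OF runs_to_step.hyps] .
  have not_new: "\<forall>p. displace w q \<noteq> NewBox p" for w q by (simp add: displace_def)
  show ?case
  proof (cases s)
    case (RowIns z r)
    from R[unfolded RowIns] show ?thesis
    proof (cases rule: runs_to_RowIns_cases)
      case new
      then show ?thesis using row_new[OF new(1)] RowIns by (simp only:)
    next
      case (bump c w)
      with runs_to_step.hyps(1) RowIns have "T' = T((r,c) := Some z)" and "s' = displace w (r,c)"
        by auto
      then have "P T' s' U S" using runs_to_step.IH not_new by metis
      then show ?thesis unfolding RowIns \<open>T' = _\<close> \<open>s' = _\<close> by (rule row_bump[OF bump(1-4)])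
    qed
  next
    case (ColIns y d)
    from R[unfolded ColIns] show ?thesis
    proof (cases rule: runs_to_ColIns_cases)
      case new
      then show ?thesis using col_new[OF new(1)] ColIns by (simp only:)
    next
      case (bump i w)
      with runs_to_step.hyps(1) ColIns have "T' = T((i,d) := Some y)" and "s' = displace w (i,d)"
        by auto
      then have "P T' s' U S" using runs_to_step.IH not_new by metis
      then show ?thesis unfolding ColIns \<open>T' = _\<close> \<open>s' = _\<close> by (rule col_bump[OF bump(1-4)])
    qed
  qed (use R runs_to_not_Hole runs_to_step.prems in blast)+
qed

subsection \<open>Young diagrams\<close>

lemma young_pos: "is_young D \<Longrightarrow> (i,j) \<in> D \<Longrightarrow> 1 \<le> i \<and> 1 \<le> j"
  unfolding is_young_def by blast

lemma young_down:
  "is_young D \<Longrightarrow> (i,j) \<in> D \<Longrightarrow> 1 \<le> i' \<Longrightarrow> i' \<le> i \<Longrightarrow> 1 \<le> j' \<Longrightarrow> j' \<le> j \<Longrightarrow> (i',j') \<in> D"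
  unfolding is_young_def by blast

lemma young_insert:
  assumes y: "is_young D" and "1 \<le> i" "1 \<le> j"
    and up: "i = 1 \<or> (i - 1, j) \<in> D" and left: "j = 1 \<or> (i, j - 1) \<in> D"
  shows "is_young (insert (i,j) D)"
proof -
  have "(i',j') \<in> insert (i,j) D" if "1 \<le> i'" "i' \<le> i" "1 \<le> j'" "j' \<le> j" for i' j'
  proof (cases "i' = i")
    case True
    then show ?thesis
      using left young_down[OF y, of i "j - 1" i' j'] that by (cases "j' = j") auto
  next
    case False
    then show ?thesis using up young_down[OF y, of "i - 1" j i' j'] that by auto
  qed
  then show ?thesis
    using y assms(2,3) unfolding is_young_def by blast
qed

lemma successive_boxes_row_le:
  assumes y: "is_young D" "is_young (insert p D)" "is_young (insert q (insert p D))"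
    and "p \<notin> D" "snd p < snd q"
  shows "fst q \<le> fst p"
proof (rule ccontr)
  obtain a b where p: "p = (a,b)" by fastforce
  obtain a' b' where q: "q = (a',b')" by fastforce
  assume "\<not> fst q \<le> fst p"
  with p q have "a < a'" by simp
  have "1 \<le> a" "1 \<le> b" using young_pos[OF y(2), of a b] p by auto
  with \<open>a < a'\<close> have "(a, b') \<in> insert q (insert p D)"
    using young_down[OF y(3), of a' b' a b'] young_pos[OF y(3), of a' b'] q by auto
  with \<open>a < a'\<close> q have "(a, b') \<in> insert p D" by auto
  with \<open>1 \<le> a\<close> have "(a, Suc b) \<in> insert p D"
    using young_down[OF y(2), of a b' a "Suc b"] assms(5) p q by simp
  then have "(a, Suc b) \<in> D" using p by simp
  then have "(a, b) \<in> D" using young_down[OF y(1), of a "Suc b" a b] \<open>1 \<le> a\<close> \<open>1 \<le> b\<close> by simp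
  with \<open>p \<notin> D\<close> p show False by simp
qed

lemma finite_down_closed_eq_atLeastAtMost:
  assumes "finite (A :: nat set)" and "\<And>c. c \<in> A \<Longrightarrow> 1 \<le> c"
    and "\<And>c c'. c \<in> A \<Longrightarrow> 1 \<le> c' \<Longrightarrow> c' \<le> c \<Longrightarrow> c' \<in> A"
  shows "A = {1..card A}"
proof (cases "A = {}")
  case False
  with assms(1) have "Max A \<in> A" by simp
  have "A = {1..Max A}"
  proof
    show "A \<subseteq> {1..Max A}" using assms(1,2) Max_ge by auto
    show "{1..Max A} \<subseteq> A" using assms(3)[OF \<open>Max A \<in> A\<close>] by auto
  qed
  then show ?thesis by (metis card_atLeastAtMost diff_Suc_1)
qed simp

lemma rowlen_iff: "is_young (dom W) \<Longrightarrow> W (r,c) \<noteq> None \<longleftrightarrow> 1 \<le> c \<and> c \<le> rowlen W r"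
proof -
  assume y: "is_young (dom W)"
  let ?A = "{c. W (r,c) \<noteq> None}"
  have "?A \<subseteq> snd ` dom W" by (force simp: image_iff)
  then have "finite ?A"
    using y finite_subset unfolding is_young_def by blast
  then have "?A = {1..rowlen W r}"
    unfolding rowlen_def
  proof (rule finite_down_closed_eq_atLeastAtMost)
    show "1 \<le> c" if "c \<in> ?A" for c
      using that young_pos[OF y] by blast
    show "c' \<in> ?A" if "c \<in> ?A" "1 \<le> c'" "c' \<le> c" for c c'
      using that young_down[OF y] young_pos[OF y] by blast
  qed
  then show ?thesis by (simp add: set_eq_iff)
qed

lemma collen_iff: "is_young (dom W) \<Longrightarrow> W (r,c) \<noteq> None \<longleftrightarrow> 1 \<le> r \<and> r \<le> collen W c"
proof -
  assume y: "is_young (dom W)"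
  let ?A = "{r. W (r,c) \<noteq> None}"
  have "?A \<subseteq> fst ` dom W" by (force simp: image_iff)
  then have "finite ?A"
    using y finite_subset unfolding is_young_def by blast
  then have "?A = {1..collen W c}"
    unfolding collen_def
  proof (rule finite_down_closed_eq_atLeastAtMost)
    show "1 \<le> r" if "r \<in> ?A" for r
      using that young_pos[OF y] by blast
    show "r' \<in> ?A" if "r \<in> ?A" "1 \<le> r'" "r' \<le> r" for r r'
      using that young_down[OF y] young_pos[OF y] by blast
  qed
  then show ?thesis by (simp add: set_eq_iff)
qed

lemma row_first_greater_le:
  assumes y: "is_young (dom W)" and "W (r,c) = Some w" "1 \<le> \<beta>" "\<forall>a. W (r,\<beta>) = Some a \<longrightarrow> z < a"
    and min: "\<forall>j<c. \<forall>e. W (r,j) = Some e \<longrightarrow> \<not> z < e"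
  shows "c \<le> \<beta>"
proof (rule ccontr)
  assume "\<not> c \<le> \<beta>"
  moreover have "(r,c) \<in> dom W" using assms(2) by blast
  ultimately have "(r,\<beta>) \<in> dom W"
    using young_down[OF y, of r c r \<beta>] young_pos[OF y] assms(3) by auto
  then obtain e where "W (r,\<beta>) = Some e" by blast
  with assms(4) min \<open>\<not> c \<le> \<beta>\<close> show False by (meson not_le)
qed

lemma rowlen_less_of_greater:
  assumes y: "is_young (dom W)" and "\<not> (\<exists>c e. W (r,c) = Some e \<and> z < e)"
    and "1 \<le> \<beta>" "\<forall>a. W (r,\<beta>) = Some a \<longrightarrow> z < a"
  shows "rowlen W r < \<beta>"
proof -
  have "W (r,\<beta>) = None" using assms(2,4) by (cases "W (r,\<beta>)") auto
  with assms(3) show ?thesis using rowlen_iff[OF y, of r \<beta>] by simp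
qed

lemma col_first_greater_le:
  assumes y: "is_young (dom W)" and "W (i,d) = Some w" "1 \<le> \<rho>" "\<forall>a. W (\<rho>,d) = Some a \<longrightarrow> y < a"
    and min: "\<forall>k<i. \<forall>e. W (k,d) = Some e \<longrightarrow> \<not> y < e"
  shows "i \<le> \<rho>"
proof (rule ccontr)
  assume "\<not> i \<le> \<rho>"
  moreover have "(i,d) \<in> dom W" using assms(2) by blast
  ultimately have "(\<rho>,d) \<in> dom W"
    using young_down[OF y, of i d \<rho> d] young_pos[OF y] assms(3) by auto
  then obtain e where "W (\<rho>,d) = Some e" by blast
  with assms(4) min \<open>\<not> i \<le> \<rho>\<close> show False by (meson not_le)
qed

lemma collen_less_of_greater:
  assumes y: "is_young (dom W)" and "\<not> (\<exists>i e. W (i,d) = Some e \<and> y < e)"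
    and "1 \<le> \<rho>" "\<forall>a. W (\<rho>,d) = Some a \<longrightarrow> y < a"
  shows "collen W d < \<rho>"
proof -
  have "W (\<rho>,d) = None" using assms(2,4) by (cases "W (\<rho>,d)") auto
  with assms(3) show ?thesis using collen_iff[OF y, of \<rho> d] by simp
qed

subsection \<open>Tableaux\<close>

definition row_le :: "entry \<Rightarrow> entry \<Rightarrow> bool" where
  "row_le a b \<longleftrightarrow> a \<le> b \<and> (isB1 a \<longrightarrow> a < b)"

definition col_le :: "entry \<Rightarrow> entry \<Rightarrow> bool" where
  "col_le a b \<longleftrightarrow> a \<le> b \<and> (isB0 a \<longrightarrow> a < b)"

text \<open>The ordering conditions of an spo-tableau, without the flag condition (an entry of
  row i is at least i) and without asking the B0 entries to fill a subdiagram. Insertion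
  preserves this weaker notion, and it is all the argument needs.\<close>
definition tableau :: "tab \<Rightarrow> bool" where
  "tableau W \<longleftrightarrow> is_young (dom W)
     \<and> (\<forall>i j a b. W (i,j) = Some a \<longrightarrow> W (i, Suc j) = Some b \<longrightarrow> row_le a b)
     \<and> (\<forall>i j a b. W (i,j) = Some a \<longrightarrow> W (Suc i, j) = Some b \<longrightarrow> col_le a b)"

lemma less_imp_row_le: "a < b \<Longrightarrow> row_le a b"
  by (simp add: row_le_def)

lemma less_imp_col_le: "a < b \<Longrightarrow> col_le a b"
  by (simp add: col_le_def)

lemma row_le_imp_le: "row_le a b \<Longrightarrow> a \<le> b"
  by (simp add: row_le_def)

lemma col_le_imp_le: "col_le a b \<Longrightarrow> a \<le> b"
  by (simp add: col_le_def)

lemma tableau_young: "tableau W \<Longrightarrow> is_young (dom W)"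
  by (simp add: tableau_def)

lemma tableau_row: "tableau W \<Longrightarrow> W (i,j) = Some a \<Longrightarrow> W (i, Suc j) = Some b \<Longrightarrow> row_le a b"
  unfolding tableau_def by blast

lemma tableau_col: "tableau W \<Longrightarrow> W (i,j) = Some a \<Longrightarrow> W (Suc i, j) = Some b \<Longrightarrow> col_le a b"
  unfolding tableau_def by blast

lemma tableau_row_mono:
  assumes t: "tableau W" and a: "W (i,j) = Some a" and b: "W (i,j') = Some b" and "j \<le> j'"
  shows "a \<le> b"
proof -
  have "W (i, j + d) = Some b \<Longrightarrow> a \<le> b" for d b
  proof (induction d arbitrary: b)
    case 0
    then show ?case using a by simp
  next
    case (Suc d)
    have y: "is_young (dom W)" using t by (rule tableau_young)
    have "(i, j) \<in> dom W" "(i, j + Suc d) \<in> dom W" using a Suc.prems by auto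
    then have "(i, j + d) \<in> dom W"
      using young_down[OF y, of i "j + Suc d" i "j + d"] young_pos[OF y, of i j] by simp
    then obtain c where c: "W (i, j + d) = Some c" by auto
    with Suc.prems have "c \<le> b"
      using tableau_row[OF t] unfolding row_le_def by fastforce
    with Suc.IH[OF c] show ?case by simp
  qed
  from this[of "j' - j"] b \<open>j \<le> j'\<close> show ?thesis by simp
qed

lemma tableau_col_mono:
  assumes t: "tableau W" and a: "W (i,j) = Some a" and b: "W (i',j) = Some b" and "i \<le> i'"
  shows "a \<le> b"
proof -
  have "W (i + d, j) = Some b \<Longrightarrow> a \<le> b" for d b
  proof (induction d arbitrary: b)
    case 0
    then show ?case using a by simp
  next
    case (Suc d)
    have y: "is_young (dom W)" using t by (rule tableau_young)
    have "(i, j) \<in> dom W" "(i + Suc d, j) \<in> dom W" using a Suc.prems by auto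
    then have "(i + d, j) \<in> dom W"
      using young_down[OF y, of "i + Suc d" j "i + d" j] young_pos[OF y, of i j] by simp
    then obtain c where c: "W (i + d, j) = Some c" by auto
    with Suc.prems have "c \<le> b"
      using tableau_col[OF t] unfolding col_le_def by fastforce
    with Suc.IH[OF c] show ?case by simp
  qed
  from this[of "i' - i"] b \<open>i \<le> i'\<close> show ?thesis by simp
qed

text \<open>For i = 1 or j = 1 the hypothesis on the missing neighbour is vacuous: i - 1 and
  j - 1 truncate to 0, and row and column 0 are empty.\<close>
lemma tableau_update:
  assumes t: "tableau W" and y: "is_young (insert (i,j) (dom W))"
    and left: "\<And>a. W (i, j - 1) = Some a \<Longrightarrow> row_le a z"
    and right: "\<And>b. W (i, Suc j) = Some b \<Longrightarrow> row_le z b"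
    and up: "\<And>a. W (i - 1, j) = Some a \<Longrightarrow> col_le a z"
    and down: "\<And>b. W (Suc i, j) = Some b \<Longrightarrow> col_le z b"
  shows "tableau (W((i,j) := Some z))"
  unfolding tableau_def
proof (intro conjI allI impI)
  show "is_young (dom (W((i,j) := Some z)))" using y by simp
next
  fix k l a b
  assume a: "(W((i,j) := Some z)) (k,l) = Some a" and b: "(W((i,j) := Some z)) (k, Suc l) = Some b"
  consider "(k,l) = (i,j)" | "(k, Suc l) = (i,j)" | "(k,l) \<noteq> (i,j)" "(k, Suc l) \<noteq> (i,j)" by blast
  then show "row_le a b"
    by cases (use a b left right tableau_row[OF t] in auto)
next
  fix k l a b
  assume a: "(W((i,j) := Some z)) (k,l) = Some a" and b: "(W((i,j) := Some z)) (Suc k, l) = Some b"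
  consider "(k,l) = (i,j)" | "(Suc k, l) = (i,j)" | "(k,l) \<noteq> (i,j)" "(Suc k, l) \<noteq> (i,j)" by blast
  then show "col_le a b"
    by cases (use a b up down tableau_col[OF t] in auto)
qed

lemma spo_tableau_B0_down_closed:
  assumes T: "spo_tableau m n T" and a: "T (i,j) = Some a" and b: "T (i',j') = Some b" "isB0 b"
    and "i \<le> i'" "j \<le> j'"
  shows "isB0 a"
proof -
  let ?D = "{p. \<exists>e. T p = Some e \<and> isB0 e}"
  have "is_young ?D" and y: "is_young (dom T)"
    using T unfolding spo_tableau_def by blast+
  moreover have "(i',j') \<in> ?D" using b by blast
  moreover have "1 \<le> i" "1 \<le> j" using young_pos[OF y, of i j] a by auto
  ultimately have "(i,j) \<in> ?D" using young_down assms(5,6) by blast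
  with a show ?thesis by auto
qed

lemma spo_tableau_tableau:
  assumes T: "spo_tableau m n T"
  shows "tableau T"
  unfolding tableau_def
proof (intro conjI allI impI)
  show "is_young (dom T)" using T unfolding spo_tableau_def by blast
next
  fix i j a b assume a: "T (i,j) = Some a" and b: "T (i, Suc j) = Some b"
  show "row_le a b"
  proof (cases "isB0 b")
    case True
    with spo_tableau_B0_down_closed[OF T a b] have "isB0 a" by simp
    with True a b T show ?thesis unfolding spo_tableau_def row_le_def by simp
  next
    case False
    with a b T B0_less_B1[of a b] show ?thesis unfolding spo_tableau_def row_le_def by fastforce
  qed
next
  fix i j a b assume a: "T (i,j) = Some a" and b: "T (Suc i, j) = Some b"
  show "col_le a b"
  proof (cases "isB0 b")
    case True
    with spo_tableau_B0_down_closed[OF T a b] have "isB0 a" by simp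
    with True a b T show ?thesis unfolding spo_tableau_def col_le_def by (simp add: less_imp_le)
  next
    case False
    with a b T B0_less_B1[of a b] show ?thesis unfolding spo_tableau_def col_le_def by fastforce
  qed
qed

subsection \<open>Insertion preserves tableaux\<close>

text \<open>The entry z is about to be inserted into row r of W; for r > 1 it was bumped
  from the cell (r - 1, \<beta>).\<close>
definition row_ins_inv :: "tab \<Rightarrow> entry \<Rightarrow> nat \<Rightarrow> nat \<Rightarrow> bool" where
  "row_ins_inv W z r \<beta> \<longleftrightarrow> tableau W \<and> isB0 z \<and> 1 \<le> r \<and>
     (1 < r \<longrightarrow> (r - 1, \<beta>) \<in> dom W \<and> (\<forall>j a. j \<le> \<beta> \<longrightarrow> W (r - 1, j) = Some a \<longrightarrow> a < z)
        \<and> (\<forall>a. W (r, \<beta>) = Some a \<longrightarrow> z < a))"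

text \<open>The entry y is about to be inserted into column d of W, bumped from the cell
  (\<rho>, d - 1).\<close>
definition col_ins_inv :: "tab \<Rightarrow> entry \<Rightarrow> nat \<Rightarrow> nat \<Rightarrow> bool" where
  "col_ins_inv W y d \<rho> \<longleftrightarrow> tableau W \<and> isB1 y \<and> 2 \<le> d \<and> 1 \<le> \<rho> \<and> (\<rho>, d - 1) \<in> dom W
     \<and> (\<forall>i a. i \<le> \<rho> \<longrightarrow> W (i, d - 1) = Some a \<longrightarrow> a < y) \<and> (\<forall>a. W (\<rho>, d) = Some a \<longrightarrow> y < a)"

lemma row_ins_inv_bump_le:
  assumes "row_ins_inv W z r \<beta>" "1 < r" and "W (r,c) = Some w"
    and "\<forall>j<c. \<forall>e. W (r,j) = Some e \<longrightarrow> \<not> z < e"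
  shows "c \<le> \<beta>"
proof -
  have y: "is_young (dom W)" using assms(1) tableau_young by (simp add: row_ins_inv_def)
  have "(r - 1, \<beta>) \<in> dom W" using assms(1,2) by (simp add: row_ins_inv_def)
  then have "1 \<le> \<beta>" using young_pos[OF y] by blast
  moreover have "\<forall>a. W (r,\<beta>) = Some a \<longrightarrow> z < a" using assms(1,2) by (simp add: row_ins_inv_def)
  ultimately show ?thesis using row_first_greater_le[OF y assms(3)] assms(4) by blast
qed

lemma row_ins_inv_new_le:
  assumes "row_ins_inv W z r \<beta>" "1 < r" and "\<not> (\<exists>c e. W (r,c) = Some e \<and> z < e)"
  shows "rowlen W r + 1 \<le> \<beta>"
proof -
  have y: "is_young (dom W)" using assms(1) tableau_young by (simp add: row_ins_inv_def)
  have "(r - 1, \<beta>) \<in> dom W" using assms(1,2) by (simp add: row_ins_inv_def)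
  then have "1 \<le> \<beta>" using young_pos[OF y] by blast
  moreover have "\<forall>a. W (r,\<beta>) = Some a \<longrightarrow> z < a" using assms(1,2) by (simp add: row_ins_inv_def)
  ultimately show ?thesis using rowlen_less_of_greater[OF y assms(3)] by (simp add: Suc_le_eq)
qed

lemma row_bump_tableau:
  assumes inv: "row_ins_inv W z r \<beta>" and w: "W (r,c) = Some w" "z < w"
    and min: "\<forall>j<c. \<forall>e. W (r,j) = Some e \<longrightarrow> \<not> z < e"
  shows "tableau (W((r,c) := Some z))"
proof -
  have t: "tableau W" and zB0: "isB0 z" using inv by (auto simp: row_ins_inv_def)
  have y: "is_young (dom W)" using t by (rule tableau_young)
  have rc: "(r,c) \<in> dom W" using w by blast
  show ?thesis
  proof (rule tableau_update[OF t])
    show "is_young (insert (r,c) (dom W))" using y rc by (simp add: insert_absorb)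
    show "row_le a z" if "W (r, c - 1) = Some a" for a
    proof -
      have "c - 1 < c" using young_pos[OF y rc] by simp
      then have "a \<le> z" using min that by (meson not_le)
      then show ?thesis using isB0_le[OF _ zB0] by (simp add: row_le_def)
    qed
    show "row_le z b" if "W (r, Suc c) = Some b" for b
      using tableau_row[OF t w(1) that] w(2) by (meson less_imp_row_le less_le_trans row_le_imp_le)
    show "col_le a z" if "W (r - 1, c) = Some a" for a
    proof -
      have "1 \<le> r - 1" using young_pos[OF y, of "r - 1" c] that by blast
      then have "1 < r" by simp
      with row_ins_inv_bump_le[OF inv this w(1) min] that inv show ?thesis
        by (auto simp: row_ins_inv_def intro: less_imp_col_le)
    qed
    show "col_le z b" if "W (Suc r, c) = Some b" for b
      using tableau_col[OF t w(1) that] w(2) by (meson less_imp_col_le less_le_trans col_le_imp_le)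
  qed
qed

lemma row_bump_row_ins_inv:
  assumes inv: "row_ins_inv W z r \<beta>" and w: "W (r,c) = Some w" "z < w" "isB0 w"
    and min: "\<forall>j<c. \<forall>e. W (r,j) = Some e \<longrightarrow> \<not> z < e"
  shows "row_ins_inv (W((r,c) := Some z)) w (Suc r) c"
proof -
  have t: "tableau W" using inv by (simp add: row_ins_inv_def)
  have "a < w" if "j \<le> c" "(W((r,c) := Some z)) (r,j) = Some a" for j a
  proof (cases "j = c")
    case False
    with that have "W (r,j) = Some a" "j < c" by auto
    with min have "a \<le> z" by (meson not_le)
    with w(2) show ?thesis by simp
  qed (use that w(2) in simp)
  moreover have "w < a" if "W (Suc r, c) = Some a" for a
    using tableau_col[OF t w(1) that] w(3) by (simp add: col_le_def)
  ultimately show ?thesis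
    using row_bump_tableau[OF inv w(1,2) min] w inv by (auto simp: row_ins_inv_def)
qed

lemma row_bump_col_ins_inv:
  assumes inv: "row_ins_inv W z r \<beta>" and w: "W (r,c) = Some w" "z < w" "isB1 w"
    and min: "\<forall>j<c. \<forall>e. W (r,j) = Some e \<longrightarrow> \<not> z < e"
  shows "col_ins_inv (W((r,c) := Some z)) w (Suc c) r"
proof -
  have t: "tableau W" using inv by (simp add: row_ins_inv_def)
  have t': "tableau (W((r,c) := Some z))" using row_bump_tableau[OF inv w(1,2) min] .
  have "1 \<le> c" using young_pos[OF tableau_young[OF t], of r c] w(1) by blast
  moreover have "a < w" if "i \<le> r" "(W((r,c) := Some z)) (i, c) = Some a" for i a
    using tableau_col_mono[OF t' that(2), of r z] that(1) w(2) by simp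
  moreover have "w < a" if "W (r, Suc c) = Some a" for a
    using tableau_row[OF t w(1) that] w(3) by (simp add: row_le_def)
  ultimately show ?thesis
    using t' w inv by (auto simp: row_ins_inv_def col_ins_inv_def)
qed

lemma row_new_tableau:
  assumes inv: "row_ins_inv W z r \<beta>" and no: "\<not> (\<exists>c e. W (r,c) = Some e \<and> z < e)"
  shows "tableau (W((r, rowlen W r + 1) := Some z))"
proof -
  have t: "tableau W" and zB0: "isB0 z" and r1: "1 \<le> r" using inv by (auto simp: row_ins_inv_def)
  have y: "is_young (dom W)" using t by (rule tableau_young)
  define L where "L = rowlen W r"
  have none: "W (r, L + 1) = None" using rowlen_iff[OF y, of r "L + 1"] by (simp add: L_def)
  have bound: "L + 1 \<le> \<beta>" if "1 < r" using row_ins_inv_new_le[OF inv that no] by (simp add: L_def)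
  show ?thesis
    unfolding L_def[symmetric]
  proof (rule tableau_update[OF t])
    have "r = 1 \<or> (r - 1, L + 1) \<in> dom W"
    proof (cases "r = 1")
      case False
      then have "1 < r" using r1 by simp
      with inv have "(r - 1, \<beta>) \<in> dom W" by (simp add: row_ins_inv_def)
      then show ?thesis
        using young_down[OF y, of "r - 1" \<beta> "r - 1" "L + 1"] bound[OF \<open>1 < r\<close>] \<open>1 < r\<close> by simp
    qed simp
    moreover have "L + 1 = 1 \<or> (r, L + 1 - 1) \<in> dom W"
      using rowlen_iff[OF y, of r L] r1 by (auto simp: L_def)
    ultimately show "is_young (insert (r, L + 1) (dom W))" using young_insert[OF y r1] by simp
    show "row_le a z" if "W (r, L + 1 - 1) = Some a" for a
      using no that isB0_le[OF _ zB0] by (auto simp: row_le_def not_less)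
    show "row_le z b" if "W (r, Suc (L + 1)) = Some b" for b
      using that rowlen_iff[OF y, of r "Suc (L + 1)"] by (simp add: L_def)
    show "col_le a z" if "W (r - 1, L + 1) = Some a" for a
    proof -
      have "1 \<le> r - 1" using young_pos[OF y, of "r - 1" "L + 1"] that by blast
      then have "1 < r" by simp
      with inv bound that show ?thesis by (auto simp: row_ins_inv_def intro: less_imp_col_le)
    qed
    show "col_le z b" if "W (Suc r, L + 1) = Some b" for b
      using that none young_down[OF y, of "Suc r" "L + 1" r "L + 1"] r1 by auto
  qed
qed

lemma col_ins_inv_bump_le:
  assumes "col_ins_inv W y d \<rho>" and "W (i,d) = Some w"
    and "\<forall>k<i. \<forall>e. W (k,d) = Some e \<longrightarrow> \<not> y < e"
  shows "i \<le> \<rho>"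
  using assms col_first_greater_le[of W i d w \<rho> y] tableau_young by (simp add: col_ins_inv_def)

lemma col_bump_tableau:
  assumes inv: "col_ins_inv W y d \<rho>" and w: "W (i,d) = Some w" "y < w"
    and min: "\<forall>k<i. \<forall>e. W (k,d) = Some e \<longrightarrow> \<not> y < e"
  shows "tableau (W((i,d) := Some y))"
proof -
  have t: "tableau W" and yB1: "isB1 y" using inv by (auto simp: col_ins_inv_def)
  have yg: "is_young (dom W)" using t by (rule tableau_young)
  have i\<rho>: "i \<le> \<rho>" using col_ins_inv_bump_le[OF inv w(1) min] .
  show ?thesis
  proof (rule tableau_update[OF t])
    show "is_young (insert (i,d) (dom W))" using yg w(1) by (simp add: insert_absorb domI)
    show "row_le a y" if "W (i, d - 1) = Some a" for a
      using inv i\<rho> that by (auto simp: col_ins_inv_def intro: less_imp_row_le)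
    show "row_le y b" if "W (i, Suc d) = Some b" for b
      using tableau_row[OF t w(1) that] w(2) by (meson less_imp_row_le less_le_trans row_le_imp_le)
    show "col_le a y" if "W (i - 1, d) = Some a" for a
    proof -
      have "(i,d) \<in> dom W" using w(1) by blast
      then have "i - 1 < i" using young_pos[OF yg, of i d] by simp
      with min that have "a \<le> y" by (meson not_le)
      with B0_less_B1[OF _ yB1] show ?thesis by (simp add: col_le_def)
    qed
    show "col_le y b" if "W (Suc i, d) = Some b" for b
      using tableau_col[OF t w(1) that] w(2) by (meson less_imp_col_le less_le_trans col_le_imp_le)
  qed
qed

lemma col_bump_col_ins_inv:
  assumes inv: "col_ins_inv W y d \<rho>" and w: "W (i,d) = Some w" "y < w"
    and min: "\<forall>k<i. \<forall>e. W (k,d) = Some e \<longrightarrow> \<not> y < e"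
  shows "col_ins_inv (W((i,d) := Some y)) w (Suc d) i"
proof -
  have t: "tableau W" and yB1: "isB1 y" using inv by (auto simp: col_ins_inv_def)
  have t': "tableau (W((i,d) := Some y))" using col_bump_tableau[OF inv w min] .
  have wB1: "isB1 w" using isB1_le[OF less_imp_le[OF w(2)] yB1] .
  have "1 \<le> i" using young_pos[OF tableau_young[OF t], of i d] w(1) by blast
  moreover have "a < w" if "k \<le> i" "(W((i,d) := Some y)) (k, d) = Some a" for k a
    using tableau_col_mono[OF t' that(2), of i y] that(1) w(2) by simp
  moreover have "w < a" if "W (i, Suc d) = Some a" for a
    using tableau_row[OF t w(1) that] wB1 by (simp add: row_le_def)
  ultimately show ?thesis
    using t' w wB1 inv by (auto simp: col_ins_inv_def)
qed

lemma col_new_tableau: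
  assumes inv: "col_ins_inv W y d \<rho>" and no: "\<not> (\<exists>i e. W (i,d) = Some e \<and> y < e)"
  shows "tableau (W((collen W d + 1, d) := Some y))"
proof -
  have t: "tableau W" and yB1: "isB1 y" and d2: "2 \<le> d" and \<rho>1: "1 \<le> \<rho>"
    and \<rho>d: "(\<rho>, d - 1) \<in> dom W" using inv by (auto simp: col_ins_inv_def)
  have yg: "is_young (dom W)" using t by (rule tableau_young)
  define L where "L = collen W d"
  have bound: "L + 1 \<le> \<rho>"
    using collen_less_of_greater[OF yg no \<rho>1] inv by (simp add: L_def col_ins_inv_def)
  show ?thesis
    unfolding L_def[symmetric]
  proof (rule tableau_update[OF t])
    have "L + 1 = 1 \<or> (L + 1 - 1, d) \<in> dom W"
      using collen_iff[OF yg, of L d] d2 by (auto simp: L_def)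
    moreover have "(L + 1, d - 1) \<in> dom W"
      using young_down[OF yg \<rho>d, of "L + 1" "d - 1"] bound d2 by simp
    ultimately show "is_young (insert (L + 1, d) (dom W))"
      using young_insert[OF yg, of "L + 1" d] d2 by simp
    show "row_le a y" if "W (L + 1, d - 1) = Some a" for a
      using inv bound that by (auto simp: col_ins_inv_def intro: less_imp_row_le)
    show "row_le y b" if "W (L + 1, Suc d) = Some b" for b
      using that young_down[OF yg, of "L + 1" "Suc d" "L + 1" d] collen_iff[OF yg, of "L + 1" d] d2
      by (auto simp: L_def)
    show "col_le a y" if "W (L + 1 - 1, d) = Some a" for a
      using no that B0_less_B1[OF _ yB1] by (auto simp: col_le_def not_less)
    show "col_le y b" if "W (Suc (L + 1), d) = Some b" for b
      using that collen_iff[OF yg, of "Suc (L + 1)" d] by (simp add: L_def)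
  qed
qed

subsection \<open>What a run changes\<close>

lemma runs_to_dom:
  assumes "runs_to W s U S" "\<forall>p. s \<noteq> NewBox p" "is_young (dom W)"
  shows "dom U = insert S (dom W) \<and> S \<notin> dom W"
  using assms
proof (induction rule: runs_to_induct)
  case (row_new W z r)
  then show ?case using rowlen_iff[of W r "rowlen W r + 1"] by auto
next
  case (row_bump W z r c w U S)
  then have "dom (W((r,c) := Some z)) = dom W" by auto
  from row_bump(5)[unfolded this] row_bump(6) show ?case by blast
next
  case (col_new W y d)
  then show ?case using collen_iff[of W "collen W d + 1" d] by auto
next
  case (col_bump W y d i w U S)
  then have "dom (W((i,d) := Some y)) = dom W" by auto
  from col_bump(5)[unfolded this] col_bump(6) show ?case by blast
qed

lemma runs_to_ColIns_left:
  assumes "runs_to W (ColIns y d) U S" "isB1 y"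
  shows "(\<forall>i j. j < d \<longrightarrow> U (i,j) = W (i,j)) \<and> d \<le> snd S"
proof -
  have "\<forall>p. ColIns y d \<noteq> NewBox p" by simp
  from assms(1) this assms(2-) show ?thesis
  proof (induction W "ColIns y d" U S arbitrary: y d rule: runs_to_induct)
    case (col_new W y d)
    then show ?case by simp
  next
    case (col_bump W y d i w U S)
    have "isB1 w" using isB1_le[OF less_imp_le[OF col_bump(2)] col_bump.prems] .
    with col_bump(5) show ?case by (auto simp: displace_B1)
  qed
qed

lemma col_bump_tail_column:
  assumes yB1: "isB1 y" and w: "W (i,d) = Some w" "y < w"
    and min: "\<forall>k<i. \<forall>e. W (k,d) = Some e \<longrightarrow> \<not> y < e"
    and R: "runs_to (W((i,d) := Some y)) (displace w (i,d)) U S"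
  shows "isB1 w" and "U (i,d) = Some y" and "k \<le> i \<Longrightarrow> U (k,d) = Some e \<Longrightarrow> e \<le> y"
proof -
  show wB1: "isB1 w" using isB1_le[OF less_imp_le[OF w(2)] yB1] .
  have Ucol: "U (k,d) = (W((i,d) := Some y)) (k,d)" for k
    using runs_to_ColIns_left[OF R[unfolded displace_B1[OF wB1]] wB1] by simp
  then show "U (i,d) = Some y" by simp
  show "e \<le> y" if "k \<le> i" "U (k,d) = Some e"
  proof (cases "k = i")
    case False
    with that have "k < i" by simp
    with that Ucol[of k] min False show ?thesis by (simp add: not_less)
  qed (use that Ucol in simp)
qed

definition B1_overwrite :: "tab \<Rightarrow> tab \<Rightarrow> nat \<times> nat \<Rightarrow> bool" where
  "B1_overwrite W U p \<longleftrightarrow> (\<exists>e. U p = Some e \<and> isB1 e) \<and> (\<forall>a. W p = Some a \<longrightarrow> isB1 a)"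

lemma runs_to_ColIns_B1_overwrite:
  assumes "runs_to W (ColIns y d) U S" "isB1 y" "is_young (dom W)" "U p \<noteq> W p"
  shows "B1_overwrite W U p"
proof -
  have "\<forall>p. ColIns y d \<noteq> NewBox p" by simp
  from assms(1) this assms(2-) show ?thesis
  proof (induction W "ColIns y d" U S arbitrary: y d rule: runs_to_induct)
    case (col_new W y d)
    then have "W p = None" using collen_iff[of W "collen W d + 1" d] by (auto split: if_splits)
    with col_new show ?case by (auto simp: B1_overwrite_def split: if_splits)
  next
    case (col_bump W y d i w U S)
    have wB1: "isB1 w" using isB1_le[OF less_imp_le[OF col_bump(2)] col_bump.prems(1)] .
    show ?case
    proof (cases "p = (i,d)")
      case True
      then have "U p = Some y"
        using runs_to_ColIns_left[OF col_bump(4)[unfolded displace_B1[OF wB1]] wB1] by simp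
      with True col_bump(1) col_bump.prems(1) wB1 show ?thesis by (simp add: B1_overwrite_def)
    next
      case False
      have "dom (W((i,d) := Some y)) = dom W" using col_bump(1) by auto
      then have "is_young (dom (W((i,d) := Some y)))" using col_bump.prems(2) by simp
      moreover have "U p \<noteq> (W((i,d) := Some y)) p" using False col_bump.prems(3) by simp
      ultimately have "B1_overwrite (W((i,d) := Some y)) U p"
        using col_bump(5)[OF displace_B1[OF wB1] wB1] by blast
      with False show ?thesis by (simp add: B1_overwrite_def)
    qed
  qed
qed

lemma runs_to_RowIns_B1_overwrite:
  assumes "runs_to W (RowIns z r) U S" "isB0 z" "is_young (dom W)" "U p \<noteq> W p"
  shows "r \<le> fst p \<or> B1_overwrite W U p"
proof -
  have "\<forall>p. RowIns z r \<noteq> NewBox p" by simp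
  from assms(1) this assms(2-) show ?thesis
  proof (induction W "RowIns z r" U S arbitrary: z r rule: runs_to_induct)
    case (row_new W z r)
    then show ?case by (auto split: if_splits)
  next
    case (row_bump W z r c w U S)
    show ?case
    proof (cases "p = (r,c)")
      case False
      have "dom (W((r,c) := Some z)) = dom W" using row_bump(1) by auto
      then have y': "is_young (dom (W((r,c) := Some z)))" using row_bump.prems(2) by simp
      have ne': "U p \<noteq> (W((r,c) := Some z)) p" using False row_bump.prems(3) by simp
      have "Suc r \<le> fst p \<or> B1_overwrite (W((r,c) := Some z)) U p"
      proof (cases "isB0 w")
        case True
        from row_bump(5)[OF displace_B0[OF True] True y' ne'] show ?thesis .
      next
        case False
        from row_bump(4) False y' ne' show ?thesis
          using runs_to_ColIns_B1_overwrite by (simp add: displace_B1)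
      qed
      with False show ?thesis by (auto simp: B1_overwrite_def)
    qed simp
  qed
qed

lemma displace_runs_to_B0_fixed:
  assumes R: "runs_to W (displace w (r,c)) U S" and y: "is_young (dom W)"
    and "fst p \<le> r" and e: "W p = Some e \<or> U p = Some e" "isB0 e"
  shows "U p = W p"
proof (rule ccontr)
  assume ne: "U p \<noteq> W p"
  have "Suc r \<le> fst p \<or> B1_overwrite W U p"
  proof (cases "isB0 w")
    case True
    from runs_to_RowIns_B1_overwrite[OF R[unfolded displace_B0[OF True]] True y ne] show ?thesis .
  next
    case False
    from runs_to_ColIns_B1_overwrite[OF R[unfolded displace_B1[OF False]] False y ne]
      show ?thesis ..
  qed
  with \<open>fst p \<le> r\<close> e show False by (auto simp: B1_overwrite_def)
qed

subsection \<open>Runs preserve tableaux and sweep through columns\<close>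

definition enters_column :: "tab \<Rightarrow> nat \<times> nat \<Rightarrow> nat \<Rightarrow> bool" where
  "enters_column U S c \<longleftrightarrow> (\<exists>W y. isB1 y \<and> runs_to W (ColIns y c) U S)"

lemma enters_column_B1:
  assumes "enters_column U S c"
  shows "\<exists>i e. U (i,c) = Some e \<and> isB1 e"
proof -
  obtain W y where yB1: "isB1 y" and R: "runs_to W (ColIns y c) U S"
    using assms by (auto simp: enters_column_def)
  from R show ?thesis
  proof (cases rule: runs_to_ColIns_cases)
    case new
    with yB1 show ?thesis by auto
  next
    case (bump i w)
    with col_bump_tail_column(2)[OF yB1 bump(1-4)] yB1 show ?thesis by blast
  qed
qed

lemma runs_to_ColIns_enters:
  assumes "runs_to W (ColIns y d) U S" "isB1 y" "d \<le> c" "c \<le> snd S"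
  shows "enters_column U S c"
proof -
  have "\<forall>p. ColIns y d \<noteq> NewBox p" by simp
  from assms(1) this assms show ?thesis
  proof (induction W "ColIns y d" U S arbitrary: y d rule: runs_to_induct)
    case (col_new W y d)
    then show ?case by (auto simp: enters_column_def)
  next
    case (col_bump W y d i w U S)
    show ?case
    proof (cases "c = d")
      case True
      with col_bump.prems show ?thesis by (auto simp: enters_column_def)
    next
      case False
      have "isB1 w" using isB1_le[OF less_imp_le[OF col_bump(2)] col_bump.prems(2)] .
      from col_bump(5)[OF displace_B1[OF this] col_bump(4)[unfolded displace_B1[OF this]] this]
        col_bump.prems False show ?thesis by simp
    qed
  qed
qed

lemma runs_to_ColIns_tableau:
  assumes "runs_to W (ColIns y d) U S" "col_ins_inv W y d \<rho>"
  shows "tableau U"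
proof -
  have "\<forall>p. ColIns y d \<noteq> NewBox p" by simp
  from assms(1) this assms(2) show ?thesis
  proof (induction W "ColIns y d" U S arbitrary: y d \<rho> rule: runs_to_induct)
    case (col_new W y d)
    then show ?case using col_new_tableau by blast
  next
    case (col_bump W y d i w U S)
    have inv: "col_ins_inv (W((i,d) := Some y)) w (Suc d) i"
      using col_bump_col_ins_inv[OF col_bump.prems col_bump(1-3)] .
    then have "isB1 w" by (simp add: col_ins_inv_def)
    from col_bump(5)[OF displace_B1[OF this] inv] show ?case .
  qed
qed

lemma runs_to_RowIns_tableau:
  assumes "runs_to W (RowIns z r) U S" "row_ins_inv W z r \<beta>"
  shows "tableau U"
proof -
  have "\<forall>p. RowIns z r \<noteq> NewBox p" by simp
  from assms(1) this assms(2) show ?thesis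
  proof (induction W "RowIns z r" U S arbitrary: z r \<beta> rule: runs_to_induct)
    case (row_new W z r)
    then show ?case using row_new_tableau by blast
  next
    case (row_bump W z r c w U S)
    show ?case
    proof (cases "isB0 w")
      case True
      have "row_ins_inv (W((r,c) := Some z)) w (Suc r) c"
        using row_bump_row_ins_inv[OF row_bump.prems row_bump(1,2) True row_bump(3)] .
      from row_bump(5)[OF displace_B0[OF True] this] show ?thesis .
    next
      case False
      from runs_to_ColIns_tableau[OF row_bump(4)[unfolded displace_B1[OF False]]
          row_bump_col_ins_inv[OF row_bump.prems row_bump(1,2) False row_bump(3)]]
      show ?thesis .
    qed
  qed
qed

text \<open>Below the first row the bumping path moves weakly left, and once it turns into a
  column insertion it moves right one column at a time, so every column to the right of
  \<beta> up to the new box is entered.\<close>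
lemma runs_to_RowIns_enters:
  assumes "runs_to W (RowIns z r) U S" "row_ins_inv W z r \<beta>" "1 < r" "\<beta> < c" "c \<le> snd S"
  shows "enters_column U S c"
proof -
  have "\<forall>p. RowIns z r \<noteq> NewBox p" by simp
  from assms(1) this assms(2-) show ?thesis
  proof (induction W "RowIns z r" U S arbitrary: z r \<beta> rule: runs_to_induct)
    case (row_new W z r)
    then show ?case using row_ins_inv_new_le by fastforce
  next
    case (row_bump W z r c' w U S)
    have "c' \<le> \<beta>" using row_ins_inv_bump_le[OF row_bump.prems(1,2) row_bump(1,3)] .
    show ?case
    proof (cases "isB0 w")
      case True
      have "row_ins_inv (W((r,c') := Some z)) w (Suc r) c'"
        using row_bump_row_ins_inv[OF row_bump.prems(1) row_bump(1,2) True row_bump(3)] .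
      from row_bump(5)[OF displace_B0[OF True] this] row_bump.prems \<open>c' \<le> \<beta>\<close> show ?thesis
        by simp
    next
      case False
      with row_bump(4) row_bump.prems \<open>c' \<le> \<beta>\<close> show ?thesis
        using runs_to_ColIns_enters by (simp add: displace_B1)
    qed
  qed
qed

subsection \<open>Comparing two column paths\<close>

definition B1_agree :: "tab \<Rightarrow> tab \<Rightarrow> nat \<Rightarrow> bool" where
  "B1_agree W U d \<longleftrightarrow> (\<forall>i j e. d \<le> j \<longrightarrow> isB1 e \<longrightarrow> (W (i,j) = Some e \<longleftrightarrow> U (i,j) = Some e))"

text \<open>The first path leaves its entry in each column it crosses; the second path meets that
  entry there and so bumps, weakly higher, a smaller entry than the first path did.
  Hence the second path still runs when the first one stops.\<close>
lemma runs_to_ColIns_compare: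
  assumes "runs_to W1 (ColIns y d) U S1" "isB1 y"
    and "runs_to W2 (ColIns y' d) V S2" "isB1 y'" "y' < y" "B1_agree W2 U d"
  shows "snd S1 < snd S2"
proof -
  have "\<forall>p. ColIns y d \<noteq> NewBox p" by simp
  from assms(1) this assms(2-) show ?thesis
  proof (induction W1 "ColIns y d" U S1 arbitrary: y d y' W2 rule: runs_to_induct)
    case (col_new W1 y d)
    have "W2 (collen W1 d + 1, d) = Some y" using col_new.prems(1,5) by (simp add: B1_agree_def)
    from col_new.prems(2) show ?case
    proof (cases rule: runs_to_ColIns_cases)
      case new
      then show ?thesis using \<open>W2 (collen W1 d + 1, d) = Some y\<close> col_new.prems(4) by blast
    next
      case (bump i' w')
      have "isB1 w'" using isB1_le[OF less_imp_le[OF bump(2)] col_new.prems(3)] .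
      from runs_to_ColIns_left[OF bump(4)[unfolded displace_B1[OF this]] this] show ?thesis by simp
    qed
  next
    case (col_bump W1 y d i w U S1)
    note col = col_bump_tail_column[OF col_bump.prems(1) col_bump(1-4)]
    have W2i: "W2 (i,d) = Some y" using col(2) col_bump.prems(1,5) by (simp add: B1_agree_def)
    from col_bump.prems(2) show ?case
    proof (cases rule: runs_to_ColIns_cases)
      case new
      then show ?thesis using W2i col_bump.prems(4) by blast
    next
      case (bump i' w')
      have w'B1: "isB1 w'" using isB1_le[OF less_imp_le[OF bump(2)] col_bump.prems(3)] .
      have "i' \<le> i" using bump(3) W2i col_bump.prems(4) by (meson not_le)
      moreover have "U (i',d) = Some w'"
        using bump(1) w'B1 col_bump.prems(5) by (simp add: B1_agree_def)
      ultimately have "w' < w" using col(3) col_bump(2) by (meson le_less_trans)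
      moreover have "B1_agree (W2((i',d) := Some y')) U (Suc d)"
        using col_bump.prems(5) by (auto simp: B1_agree_def)
      ultimately show ?thesis
        using col_bump(5)[OF displace_B1[OF col(1)] col(1)] bump(4) w'B1 by (simp add: displace_B1)
    qed
  qed
qed

lemma enters_column_compare:
  assumes "enters_column U S1 c" and R2: "runs_to W2 (ColIns y' (Suc c)) V S2" "isB1 y'"
    and Uk: "U (k,c) = Some y'" and above: "\<forall>i<k. \<forall>e. U (i,c) = Some e \<longrightarrow> isB0 e"
    and agree: "B1_agree W2 U (Suc c)"
  shows "snd S1 < snd S2"
proof -
  obtain W1 y where yB1: "isB1 y" and R1: "runs_to W1 (ColIns y c) U S1"
    using assms(1) by (auto simp: enters_column_def)
  have "Suc c \<le> snd S2" using runs_to_ColIns_left[OF R2] by simp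
  from R1 show ?thesis
  proof (cases rule: runs_to_ColIns_cases)
    case new
    with \<open>Suc c \<le> snd S2\<close> show ?thesis by simp
  next
    case (bump i w)
    note col = col_bump_tail_column[OF yB1 bump(1-4)]
    from col(2) above yB1 have "k \<le> i" by (meson not_le)
    with Uk col(3) bump(2) have "y' < w" by (meson le_less_trans)
    from runs_to_ColIns_compare[OF bump(4)[unfolded displace_B1[OF col(1)]] col(1) R2 this agree]
    show ?thesis .
  qed
qed

subsection \<open>The two row insertions in lockstep\<close>

text \<open>The second insertion, run on the result U of the first, is about to insert z into
  row r of W; for r > 1 it bumped z from column \<beta> of row r - 1.\<close>
definition second_ins_inv :: "tab \<Rightarrow> tab \<Rightarrow> entry \<Rightarrow> nat \<Rightarrow> nat \<Rightarrow> bool" where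
  "second_ins_inv U W z r \<beta> \<longleftrightarrow> isB0 z \<and> (\<forall>i j. r \<le> i \<longrightarrow> W (i,j) = U (i,j))
     \<and> (\<forall>p. W p \<noteq> U p \<longrightarrow> (\<exists>a. W p = Some a \<and> isB0 a) \<and> (\<exists>b. U p = Some b \<and> isB0 b))
     \<and> (1 < r \<longrightarrow> 1 \<le> \<beta> \<and> (\<forall>a. U (r,\<beta>) = Some a \<longrightarrow> z < a)
          \<and> (\<forall>i<r. \<forall>j\<le>\<beta>. \<forall>e. U (i,j) = Some e \<longrightarrow> isB0 e))"

lemma second_ins_inv_B1_eq:
  assumes "second_ins_inv U W z r \<beta>" "isB1 e"
  shows "W p = Some e \<longleftrightarrow> U p = Some e"
proof (cases "W p = U p")
  case False
  with assms have "(\<exists>a. W p = Some a \<and> isB0 a) \<and> (\<exists>b. U p = Some b \<and> isB0 b)"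
    unfolding second_ins_inv_def by blast
  with assms(2) show ?thesis by auto
qed simp

lemma second_ins_inv_above_B0:
  assumes inv: "second_ins_inv U W z r \<beta>" and y: "is_young (dom U)"
    and "W (r,c) = Some w" and min: "\<forall>j<c. \<forall>e. W (r,j) = Some e \<longrightarrow> \<not> z < e"
    and "i < r" "j \<le> c" "U (i,j) = Some e"
  shows "isB0 e"
proof -
  have "(i,j) \<in> dom U" using assms(7) by blast
  then have "1 \<le> i" using young_pos[OF y] by blast
  with \<open>i < r\<close> have "1 < r" by simp
  with inv have row: "\<forall>k. U (r,k) = W (r,k)" and "1 \<le> \<beta>" and "\<forall>a. U (r,\<beta>) = Some a \<longrightarrow> z < a"
    and left: "\<forall>i<r. \<forall>j\<le>\<beta>. \<forall>e. U (i,j) = Some e \<longrightarrow> isB0 e"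
    by (simp_all add: second_ins_inv_def)
  with assms(3) min have "c \<le> \<beta>" using row_first_greater_le[OF y, of r c w \<beta> z] by simp
  with left assms(5-7) show ?thesis by (meson le_trans)
qed

lemma second_ins_inv_step:
  assumes inv: "second_ins_inv U W z r \<beta>" and tU: "tableau U"
    and w: "W (r,c) = Some w" "isB0 w" and min: "\<forall>j<c. \<forall>e. W (r,j) = Some e \<longrightarrow> \<not> z < e"
  shows "second_ins_inv U (W((r,c) := Some z)) w (Suc r) c"
proof -
  have y: "is_young (dom U)" using tU by (rule tableau_young)
  have zB0: "isB0 z" and rows: "\<forall>i j. r \<le> i \<longrightarrow> W (i,j) = U (i,j)"
    and diff: "\<forall>p. W p \<noteq> U p \<longrightarrow> (\<exists>a. W p = Some a \<and> isB0 a) \<and> (\<exists>b. U p = Some b \<and> isB0 b)"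
    using inv by (simp_all add: second_ins_inv_def)
  have Urc: "U (r,c) = Some w" using rows w(1) by auto
  have "1 \<le> c" using young_pos[OF y, of r c] Urc by auto
  moreover have "w < a" if "U (Suc r, c) = Some a" for a
    using tableau_col[OF tU Urc that] w(2) by (simp add: col_le_def)
  moreover have "isB0 e" if "i < Suc r" "j \<le> c" "U (i,j) = Some e" for i j e
  proof (cases "i = r")
    case True
    show ?thesis
    proof (cases "j = c")
      case False
      with that have "j < c" by simp
      with that True rows min have "e \<le> z" by (simp add: not_less)
      from isB0_le[OF this zB0] show ?thesis .
    qed (use that True Urc w in simp)
  next
    case False
    with that have "i < r" by simp
    from second_ins_inv_above_B0[OF inv y w(1) min this that(2,3)] show ?thesis .
  qed
  moreover have "\<forall>i j. Suc r \<le> i \<longrightarrow> (W((r,c) := Some z)) (i,j) = U (i,j)" using rows by simp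
  moreover have "(\<exists>a. (W((r,c) := Some z)) p = Some a \<and> isB0 a) \<and> (\<exists>b. U p = Some b \<and> isB0 b)"
    if "(W((r,c) := Some z)) p \<noteq> U p" for p
  proof (cases "p = (r,c)")
    case False
    with that diff[rule_format, of p] show ?thesis by simp
  qed (use Urc zB0 w(2) in simp)
  ultimately show ?thesis using w(2) unfolding second_ins_inv_def by blast
qed

lemma first_new_no_bump:
  assumes U: "U = W1((r, rowlen W1 r + 1) := Some z)" and no1: "\<not> (\<exists>c e. W1 (r,c) = Some e \<and> z < e)"
    and "z \<le> z'" and tU: "tableau U" and row: "\<forall>j. W (r,j) = U (r,j)"
  shows "\<not> (\<exists>c e. W (r,c) = Some e \<and> z' < e)" and "rowlen W1 r + 1 \<le> rowlen W r"
proof -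
  show "\<not> (\<exists>c e. W (r,c) = Some e \<and> z' < e)"
  proof
    assume "\<exists>c e. W (r,c) = Some e \<and> z' < e"
    then obtain c e where "U (r,c) = Some e" "z' < e" using row by metis
    moreover from this(1) U no1 have "e \<le> z" by (cases "c = rowlen W1 r + 1") (auto simp: not_less)
    ultimately show False using \<open>z \<le> z'\<close> by simp
  qed
  have "rowlen W r = rowlen U r" using row by (simp add: rowlen_def)
  moreover have "U (r, rowlen W1 r + 1) \<noteq> None" using U by simp
  ultimately show "rowlen W1 r + 1 \<le> rowlen W r" using rowlen_iff[OF tableau_young[OF tU]] by simp
qed

lemma bump_tail_enters:
  assumes inv: "row_ins_inv W z r \<beta>" and w: "W (r,c) = Some w" "z < w"
    and min: "\<forall>j<c. \<forall>e. W (r,j) = Some e \<longrightarrow> \<not> z < e"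
    and R: "runs_to (W((r,c) := Some z)) (displace w (r,c)) U S" and "c < j" "j \<le> snd S"
  shows "enters_column U S j"
proof (cases "isB0 w")
  case True
  have "1 \<le> r" using inv by (simp add: row_ins_inv_def)
  have "row_ins_inv (W((r,c) := Some z)) w (Suc r) c"
    using row_bump_row_ins_inv[OF inv w True min] .
  from runs_to_RowIns_enters[OF R[unfolded displace_B0[OF True]] this] \<open>1 \<le> r\<close> assms(6,7)
  show ?thesis by simp
next
  case False
  with runs_to_ColIns_enters[OF R[unfolded displace_B1[OF False]] False] assms(6,7) show ?thesis
    by simp
qed

lemma lockstep_second_new:
  assumes tU: "tableau U" and inv: "second_ins_inv U W z r \<beta>" and "1 \<le> r"
    and no: "\<not> (\<exists>c e. U (r,c) = Some e \<and> z < e)"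
    and enters: "\<forall>j. c < j \<longrightarrow> j \<le> snd S1 \<longrightarrow> enters_column U S1 j" and "c \<le> rowlen U r"
  shows "snd S1 < rowlen U r + 1"
proof (rule ccontr)
  define L where "L = rowlen U r"
  have y: "is_young (dom U)" using tU by (rule tableau_young)
  assume "\<not> snd S1 < rowlen U r + 1"
  with enters \<open>c \<le> rowlen U r\<close> have "enters_column U S1 (L + 1)" by (simp add: L_def)
  then obtain i e where ie: "U (i, L + 1) = Some e" "isB1 e" using enters_column_B1 by blast
  then have iL: "(i, L + 1) \<in> dom U" by blast
  show False
  proof (cases "r \<le> i")
    case True
    then have "(r, L + 1) \<in> dom U" using young_down[OF y iL, of r "L + 1"] \<open>1 \<le> r\<close> by simp
    then show False using rowlen_iff[OF y, of r "L + 1"] by (auto simp: L_def)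
  next
    case False
    then have "1 < r" using young_pos[OF y iL] by simp
    then have "1 \<le> \<beta>" "\<forall>a. U (r,\<beta>) = Some a \<longrightarrow> z < a"
      "\<forall>i<r. \<forall>j\<le>\<beta>. \<forall>e. U (i,j) = Some e \<longrightarrow> isB0 e"
      using inv by (auto simp: second_ins_inv_def)
    moreover have "L < \<beta>"
      using rowlen_less_of_greater[OF y no] calculation(1,2) by (simp add: L_def)
    moreover have "i < r" using False by simp
    ultimately have "isB0 e" using ie(1) by (metis Suc_eq_plus1 Suc_leI)
    with ie(2) show False by simp
  qed
qed

lemma lockstep_second_col:
  assumes inv: "second_ins_inv U W z r \<beta>" and w: "U (r,c') = Some w'" "isB1 w'"
    and R2: "runs_to (W((r,c') := Some z)) (ColIns w' (Suc c')) V S2"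
    and above: "\<forall>i<r. \<forall>e. U (i,c') = Some e \<longrightarrow> isB0 e"
    and "c < c'" and enters: "\<forall>j. c < j \<longrightarrow> j \<le> snd S1 \<longrightarrow> enters_column U S1 j"
  shows "snd S1 < snd S2"
proof (cases "snd S1 < c'")
  case True
  with runs_to_ColIns_left[OF R2 w(2)] show ?thesis by simp
next
  case False
  have "B1_agree (W((r,c') := Some z)) U (Suc c')"
    unfolding B1_agree_def
  proof (intro allI impI)
    fix i j e assume "Suc c' \<le> j" "isB1 e"
    then have "(W((r,c') := Some z)) (i,j) = W (i,j)" by simp
    moreover have "W (i,j) = Some e \<longleftrightarrow> U (i,j) = Some e"
      using second_ins_inv_B1_eq[OF inv \<open>isB1 e\<close>] .
    ultimately show "(W((r,c') := Some z)) (i,j) = Some e \<longleftrightarrow> U (i,j) = Some e" by simp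
  qed
  with False enters \<open>c < c'\<close> show ?thesis
    using enters_column_compare[OF _ R2 w(2) w(1) above] by simp
qed

lemma bump_tail_row:
  assumes inv: "row_ins_inv W z r \<beta>" and w: "W (r,c) = Some w"
    and R: "runs_to (W((r,c) := Some z)) (displace w (r,c)) U S"
  shows "U (r,c) = Some z" and "U (r,j) = Some e \<Longrightarrow> isB0 e \<Longrightarrow> j \<noteq> c \<Longrightarrow> W (r,j) = Some e"
proof -
  have "dom (W((r,c) := Some z)) = dom W" using w by auto
  then have y: "is_young (dom (W((r,c) := Some z)))"
    using inv tableau_young by (simp add: row_ins_inv_def)
  have zB0: "isB0 z" using inv by (simp add: row_ins_inv_def)
  show "U (r,c) = Some z" using displace_runs_to_B0_fixed[OF R y, of "(r,c)" z] zB0 by simp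
  show "W (r,j) = Some e" if "U (r,j) = Some e" "isB0 e" "j \<noteq> c"
    using displace_runs_to_B0_fixed[OF R y, of "(r,j)" e] that by simp
qed

lemma lockstep_second_stops:
  assumes R1: "runs_to W1 (RowIns z r) U S1" and inv1: "row_ins_inv W1 z r \<beta>1" and tU: "tableau U"
    and "z \<le> z'" and inv2: "second_ins_inv U W z' r \<beta>"
    and no2: "\<not> (\<exists>c e. W (r,c) = Some e \<and> z' < e)"
  shows "snd S1 < rowlen W r + 1"
proof -
  have y: "is_young (dom U)" using tU by (rule tableau_young)
  have row: "\<forall>j. W (r,j) = U (r,j)" using inv2 by (simp add: second_ins_inv_def)
  have rl: "rowlen W r = rowlen U r" using row by (simp add: rowlen_def)
  from R1 show ?thesis
  proof (cases rule: runs_to_RowIns_cases)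
    case new
    with first_new_no_bump(2)[OF new(2,1) \<open>z \<le> z'\<close> tU row] show ?thesis by simp
  next
    case (bump c w)
    have "U (r,c) = Some z" using bump_tail_row(1)[OF inv1 bump(1,4)] .
    then have "c \<le> rowlen U r" using rowlen_iff[OF y, of r c] by simp
    moreover have "1 \<le> r" using inv1 by (simp add: row_ins_inv_def)
    moreover have "\<not> (\<exists>c e. U (r,c) = Some e \<and> z' < e)" using no2 row by simp
    moreover have "\<forall>j. c < j \<longrightarrow> j \<le> snd S1 \<longrightarrow> enters_column U S1 j"
      using bump_tail_enters[OF inv1 bump(1-4)] by blast
    ultimately show ?thesis using lockstep_second_new[OF tU inv2] rl by simp
  qed
qed

lemma lockstep_bump_right:
  assumes inv1: "row_ins_inv W1 z r \<beta>1" and w: "W1 (r,c) = Some w"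
    and R1: "runs_to (W1((r,c) := Some z)) (displace w (r,c)) U S1" and tU: "tableau U"
    and "z \<le> z'" and inv2: "second_ins_inv U W z' r \<beta>" and w': "W (r,c') = Some w'" "z' < w'"
  shows "c < c'"
proof (rule ccontr)
  assume "\<not> c < c'"
  have "U (r,c') = Some w'" using inv2 w'(1) by (simp add: second_ins_inv_def)
  with bump_tail_row(1)[OF inv1 w R1] \<open>\<not> c < c'\<close> have "w' \<le> z"
    using tableau_row_mono[OF tU] by simp
  with w'(2) \<open>z \<le> z'\<close> show False by simp
qed

lemma lockstep:
  assumes R2: "runs_to W (RowIns z' r) V S2" and R1: "runs_to W1 (RowIns z r) U S1"
    and inv1: "row_ins_inv W1 z r \<beta>1" and tU: "tableau U" and "z \<le> z'"
    and inv2: "second_ins_inv U W z' r \<beta>"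
  shows "snd S1 < snd S2"
proof -
  have y: "is_young (dom U)" using tU by (rule tableau_young)
  have "\<forall>p. RowIns z' r \<noteq> NewBox p" by simp
  from R2 this R1 inv1 \<open>z \<le> z'\<close> inv2 show ?thesis
  proof (induction W "RowIns z' r" V S2 arbitrary: z' r W1 z \<beta>1 \<beta> rule: runs_to_induct)
    case (row_new W z' r)
    from lockstep_second_stops[OF row_new.prems(1,2) tU row_new.prems(3,4) row_new.hyps] show ?case
      by simp
  next
    case (row_bump W z' r c' w' V S2)
    have row: "\<forall>j. W (r,j) = U (r,j)" using row_bump.prems(4) by (simp add: second_ins_inv_def)
    from row_bump.prems(1) show ?case
    proof (cases rule: runs_to_RowIns_cases)
      case new
      with first_new_no_bump(1)[OF new(2,1) row_bump.prems(3) tU row] row_bump.hyps(1,2)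
      show ?thesis by blast
    next
      case (bump c w)
      have "c < c'"
        using lockstep_bump_right[OF row_bump.prems(2) bump(1,4) tU row_bump.prems(3,4)
            row_bump.hyps(1,2)] .
      have Urc': "U (r,c') = Some w'" using row row_bump.hyps(1) by simp
      show ?thesis
      proof (cases "isB0 w'")
        case True
        have "W1 (r,c') = Some w'"
          using bump_tail_row(2)[OF row_bump.prems(2) bump(1,4) Urc' True] \<open>c < c'\<close> by simp
        moreover have "tableau W1" using row_bump.prems(2) by (simp add: row_ins_inv_def)
        ultimately have "w \<le> w'" using tableau_row_mono[of W1 r c w c' w'] bump(1) \<open>c < c'\<close> by simp
        then have "isB0 w" using isB0_le True by blast
        with \<open>w \<le> w'\<close> show ?thesis
          using row_bump.hyps(5)[OF displace_B0[OF True] bump(4)[unfolded displace_B0[OF \<open>isB0 w\<close>]]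
              row_bump_row_ins_inv[OF row_bump.prems(2) bump(1,2) \<open>isB0 w\<close> bump(3)] _
              second_ins_inv_step[OF row_bump.prems(4) tU row_bump.hyps(1) True row_bump.hyps(3)]]
          by blast
      next
        case False
        have "\<forall>i<r. \<forall>e. U (i,c') = Some e \<longrightarrow> isB0 e"
          using second_ins_inv_above_B0[OF row_bump.prems(4) y row_bump.hyps(1,3)] by blast
        from lockstep_second_col[OF row_bump.prems(4) Urc' False
            row_bump.hyps(4)[unfolded displace_B1[OF False]] this \<open>c < c'\<close>]
          bump_tail_enters[OF row_bump.prems(2) bump(1-4)]
        show ?thesis by blast
      qed
    qed
  qed
qed

theorem mainTheorem4:
  fixes m n :: nat and T U V :: tab and x1 x2 :: entry and S1 S2 :: "nat \<times> nat"
  assumes "spo_tableau m n T"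
    and "inB0 m x1" and "inB0 m x2" and "x1 \<le> x2"
    and "ins_newbox T x1 U S1"
    and "ins_newbox U x2 V S2"
  shows "snd S1 < snd S2 \<and> fst S2 \<le> fst S1"
proof -
  have tT: "tableau T" using spo_tableau_tableau[OF assms(1)] .
  have "isB0 x1" "isB0 x2" using assms(2,3) by (auto simp: inB0_def)
  have R1: "runs_to T (RowIns x1 1) U S1" and R2: "runs_to U (RowIns x2 1) V S2"
    using ins_newbox_runs_to assms(5,6) by blast+
  have inv1: "row_ins_inv T x1 1 0" using tT \<open>isB0 x1\<close> by (simp add: row_ins_inv_def)
  have tU: "tableau U" using runs_to_RowIns_tableau[OF R1 inv1] .
  have inv2: "row_ins_inv U x2 1 0" using tU \<open>isB0 x2\<close> by (simp add: row_ins_inv_def)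
  have tV: "tableau V" using runs_to_RowIns_tableau[OF R2 inv2] .
  have "second_ins_inv U U x2 1 0" using \<open>isB0 x2\<close> by (simp add: second_ins_inv_def)
  from lockstep[OF R2 R1 inv1 tU assms(4) this] have col: "snd S1 < snd S2" .
  have "dom U = insert S1 (dom T)" "S1 \<notin> dom T" "dom V = insert S2 (dom U)"
    using runs_to_dom[OF R1] runs_to_dom[OF R2] tableau_young[OF tT] tableau_young[OF tU]
    by simp_all
  with col have "fst S2 \<le> fst S1"
    using successive_boxes_row_le tableau_young[OF tT] tableau_young[OF tU] tableau_young[OF tV]
    by metis
  with col show ?thesis ..
qed

end
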